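(* A $5 \times 5$ real matrix is panstochastic if and only if it is a convex combination of panstochastic permutation matrices.
   Context: An $n \times n$ matrix with nonnegative real entries is doubly stochastic if the sum of the entries along any of its rows or columns is equal to $1$. A doubly stochastic matrix is panstochastic if the sum of the entries along any downward diagonal or upward diagonal, either broken or unbroken, is equal to $1$ (indexing rows and columns by $\{0,1,\dots,n-1\}$, the $k$th upward diagonal consists of the entries $(i,j)$ with $i+j \equiv k \pmod n$, and the $k$th downward diagonal of the entries $(i,j)$ with $i-j \equiv k \pmod n$). A linear combination is called convex if the coefficients are nonnegative and their sum is equal to $1$. *)

theory Defs
  imports "HOL-Analysis.Analysis" "HOL-Combinatorics.Permutations"
begin

text \<open>An n x n real matrix is modelled as a function A :: nat => nat => real,
  rows and columns indexed by {0..<n}; entries outside are irrelevant.\<close>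

definition doubly_stochastic :: "nat \<Rightarrow> (nat \<Rightarrow> nat \<Rightarrow> real) \<Rightarrow> bool" where
  "doubly_stochastic n A \<longleftrightarrow>
     (\<forall>i<n. \<forall>j<n. A i j \<ge> 0) \<and>
     (\<forall>i<n. (\<Sum>j<n. A i j) = 1) \<and>
     (\<forall>j<n. (\<Sum>i<n. A i j) = 1)"

definition panstochastic :: "nat \<Rightarrow> (nat \<Rightarrow> nat \<Rightarrow> real) \<Rightarrow> bool" where
  "panstochastic n A \<longleftrightarrow> doubly_stochastic n A \<and>
     (\<forall>k<n. (\<Sum>(i,j)\<in>{(i,j). i < n \<and> j < n \<and> (i + j) mod n = k}. A i j) = 1) \<and>
     (\<forall>k<n. (\<Sum>(i,j)\<in>{(i,j). i < n \<and> j < n \<and> (int i - int j) mod int n = int k}. A i j) = 1)"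

definition perm_matrix :: "(nat \<Rightarrow> nat) \<Rightarrow> nat \<Rightarrow> nat \<Rightarrow> real" where
  "perm_matrix \<sigma> i j = (if j = \<sigma> i then 1 else 0)"

definition is_perm_matrix :: "nat \<Rightarrow> (nat \<Rightarrow> nat \<Rightarrow> real) \<Rightarrow> bool" where
  "is_perm_matrix n P \<longleftrightarrow> (\<exists>\<sigma>. \<sigma> permutes {0..<n} \<and> (\<forall>i<n. \<forall>j<n. P i j = perm_matrix \<sigma> i j))"

definition convex_comb_of :: "nat \<Rightarrow> ((nat \<Rightarrow> nat \<Rightarrow> real) \<Rightarrow> bool) \<Rightarrow> (nat \<Rightarrow> nat \<Rightarrow> real) \<Rightarrow> bool" where
  "convex_comb_of n Q A \<longleftrightarrow>
     (\<exists>m::nat. \<exists>c :: nat \<Rightarrow> real. \<exists>M :: nat \<Rightarrow> nat \<Rightarrow> nat \<Rightarrow> real.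
        (\<forall>l<m. c l \<ge> 0 \<and> Q (M l)) \<and> (\<Sum>l<m. c l) = 1 \<and>
        (\<forall>i<n. \<forall>j<n. A i j = (\<Sum>l<m. c l * M l i j)))"

end

theory Submission
  imports Defs "HOL-Number_Theory.Cong"
begin

(* Index the 5 x 5 grid by Z_5 x Z_5.  Rows, columns and the two diagonal directions are four of
   its six parallel classes of lines, and panstochasticity says every line in them has sum 1.
   The six lines through an entry cover it six times and every other entry once, so
   5 A i j = S2 + S3 - 1, where S2 and S3 are the sums along the lines of slope 2 and 3 through
   (i, j).  The lines of slope 2 (resp. 3) are the supports of five panstochastic permutation
   matrices, and any line of slope 2 meets any line of slope 3 in an entry of A; so after moving a
   suitable constant from the slope-2 weights S2/5 to the slope-3 weights (S3 - 1)/5 all weights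
   are nonnegative and A is their convex combination. *)

text \<open>The sum of A along the broken line j = a i + k over \<open>\<int>/n\<close>; slopes 0, 1 and n - 1 give the
  columns, the downward and the upward diagonals.\<close>

definition line_sum :: "nat \<Rightarrow> (nat \<Rightarrow> nat \<Rightarrow> real) \<Rightarrow> nat \<Rightarrow> nat \<Rightarrow> real" where
  "line_sum n A a k = (\<Sum>i<n. A i ((k + a * i) mod n))"

text \<open>The k with (i, j) on the line j = a i + k; n - i stands for -i.\<close>

definition intercept :: "nat \<Rightarrow> nat \<Rightarrow> nat \<Rightarrow> nat \<Rightarrow> nat" where
  "intercept n a i j = (j + a * (n - i)) mod n"

definition affine_perm :: "nat \<Rightarrow> nat \<Rightarrow> nat \<Rightarrow> nat \<Rightarrow> nat" where
  "affine_perm n a k i = (if i < n then (k + a * i) mod n else i)"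

lemma bij_betw_affine_mod:
  fixes c d n :: nat
  assumes "coprime d n"
  shows "bij_betw (\<lambda>x. (c + x * d) mod n) {..<n} {..<n}"
proof -
  have "inj_on (\<lambda>x. (c + x * d) mod n) {..<n}"
  proof (rule inj_onI)
    fix x y
    assume "x \<in> {..<n}" "y \<in> {..<n}" and "(c + x * d) mod n = (c + y * d) mod n"
    then have "[x * d = y * d] (mod n)"
      by (simp add: cong_def[symmetric] cong_add_lcancel_nat)
    then have "[x = y] (mod n)"
      using assms by (simp add: cong_mult_rcancel_nat)
    then show "x = y"
      using \<open>x \<in> {..<n}\<close> \<open>y \<in> {..<n}\<close> by (simp add: cong_def)
  qed
  moreover have "(\<lambda>x. (c + x * d) mod n) ` {..<n} \<subseteq> {..<n}"
    by auto
  ultimately show ?thesis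
    by (simp add: bij_betw_def endo_inj_surj)
qed

lemma affine_perm_permutes:
  assumes "coprime a n"
  shows "affine_perm n a k permutes {0..<n}"
proof (rule bij_imp_permutes)
  have "bij_betw (\<lambda>i. (k + i * a) mod n) {..<n} {..<n}"
    using assms by (rule bij_betw_affine_mod)
  then show "bij_betw (affine_perm n a k) {0..<n} {0..<n}"
    unfolding atLeast0LessThan
    by (rule bij_betw_cong[THEN iffD2, rotated]) (simp add: affine_perm_def mult.commute)
qed (simp add: affine_perm_def)

lemma on_line_iff_intercept:
  assumes "i < n" "j < n" "k < n"
  shows "j = (k + a * i) mod n \<longleftrightarrow> k = intercept n a i j"
proof -
  have full_turn: "a * i + a * (n - i) = a * n"
    using assms(1) by (simp flip: add_mult_distrib2)
  show ?thesis
  proof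
    assume "j = (k + a * i) mod n"
    then have "intercept n a i j = (k + (a * i + a * (n - i))) mod n"
      by (simp add: intercept_def mod_add_left_eq add.assoc)
    then show "k = intercept n a i j"
      using assms(3) by (simp add: full_turn)
  next
    assume "k = intercept n a i j"
    then have "(k + a * i) mod n = (j + a * (n - i) + a * i) mod n"
      by (simp add: intercept_def mod_add_left_eq)
    then have "(k + a * i) mod n = (j + (a * i + a * (n - i))) mod n"
      by (simp add: ac_simps)
    then show "j = (k + a * i) mod n"
      using assms(2) by (simp add: full_turn)
  qed
qed

lemma sum_affine_perm_matrices:
  assumes "i < n" "j < n"
  shows "(\<Sum>k<n. f k * perm_matrix (affine_perm n a k) i j) = f (intercept n a i j)"
proof -
  have "(\<Sum>k<n. f k * perm_matrix (affine_perm n a k) i j)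
      = (\<Sum>k<n. if k = intercept n a i j then f k else 0)"
    using assms by (intro sum.cong) (auto simp: perm_matrix_def affine_perm_def on_line_iff_intercept)
  also have "\<dots> = f (intercept n a i j)"
    using assms by (simp add: intercept_def)
  finally show ?thesis .
qed

lemma sum_line_sums: "(\<Sum>k<n. line_sum n A a k) = (\<Sum>i<n. \<Sum>j<n. A i j)"
proof -
  have "(\<Sum>k<n. line_sum n A a k) = (\<Sum>i<n. \<Sum>k<n. A i ((a * i + k * 1) mod n))"
    unfolding line_sum_def by (subst sum.swap) (simp add: add.commute)
  also have "\<dots> = (\<Sum>i<n. \<Sum>j<n. A i j)"
    by (intro sum.cong refl sum.reindex_bij_betw[of "\<lambda>k. (_ + k * 1) mod n"] bij_betw_affine_mod) simp
  finally show ?thesis .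
qed

lemma lines_meet_at_iff:
  fixes a b c d k i n :: nat
  assumes "a mod n = (b + d) mod n"
  shows "(c + b * i) mod n = (k + a * i) mod n \<longleftrightarrow> (k + i * d) mod n = c mod n"
proof -
  have "[a * i = (b + d) * i] (mod n)"
    using assms by (simp add: cong_def[symmetric] cong_scalar_right)
  then have "[k + a * i = b * i + (k + i * d)] (mod n)"
    by (simp add: cong_add_lcancel_nat algebra_simps)
  then have "(c + b * i) mod n = (k + a * i) mod n \<longleftrightarrow> [b * i + c = b * i + (k + i * d)] (mod n)"
    by (auto simp: cong_def add.commute)
  also have "\<dots> \<longleftrightarrow> (k + i * d) mod n = c mod n"
    by (simp only: cong_add_lcancel_nat) (auto simp: cong_def)
  finally show ?thesis .
qed

lemma line_sum_affine_perm_matrix: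
  assumes "coprime d n" "a mod n = (b + d) mod n" "c < n"
  shows "line_sum n (perm_matrix (affine_perm n a k)) b c = 1"
proof -
  have "line_sum n (perm_matrix (affine_perm n a k)) b c = (\<Sum>i<n. if (k + i * d) mod n = c then 1 else 0)"
    unfolding line_sum_def perm_matrix_def affine_perm_def
    using assms(2,3) by (intro sum.cong) (simp_all add: lines_meet_at_iff)
  also have "\<dots> = (\<Sum>j<n. if j = c then 1 else 0)"
    using bij_betw_affine_mod[OF assms(1)] by (rule sum.reindex_bij_betw)
  also have "\<dots> = 1"
    using assms(3) by simp
  finally show ?thesis .
qed

lemma lines_meet:
  fixes a b c d k n :: nat
  assumes "coprime d n" "a mod n = (b + d) mod n" "c < n"
  obtains i where "i < n" "(c + b * i) mod n = (k + a * i) mod n"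
proof -
  have "c \<in> (\<lambda>i. (k + i * d) mod n) ` {..<n}"
    using bij_betw_affine_mod[OF assms(1), of k] assms(3) by (simp add: bij_betw_def)
  then obtain i where "i < n" "(k + i * d) mod n = c"
    by auto
  then show thesis
    using that lines_meet_at_iff[OF assms(2)] assms(3) by simp
qed

lemma sum_over_graph:
  assumes "\<And>i j. i < n \<Longrightarrow> j < n \<Longrightarrow> P i j \<longleftrightarrow> j = f i" and "\<And>i. i < n \<Longrightarrow> f i < n"
  shows "(\<Sum>(i, j)\<in>{(i, j). i < n \<and> j < n \<and> P i j}. A i j) = (\<Sum>i<n. A i (f i))"
proof -
  have "{(i, j). i < n \<and> j < n \<and> P i j} = (\<lambda>i. (i, f i)) ` {..<n}"
    using assms by auto
  then show ?thesis
    by (simp add: sum.reindex inj_on_def)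
qed

lemma sum_up_diagonal:
  fixes A :: "nat \<Rightarrow> nat \<Rightarrow> real"
  assumes "k < n"
  shows "(\<Sum>(i, j)\<in>{(i, j). i < n \<and> j < n \<and> (i + j) mod n = k}. A i j) = line_sum n A (n - 1) k"
  unfolding line_sum_def
proof (rule sum_over_graph)
  fix i j assume "i < n" "j < n"
  have "j = (k + (n - 1) * i) mod n \<longleftrightarrow> [k + (n - 1) * i = j] (mod n)"
    using \<open>j < n\<close> by (auto simp: cong_def)
  also have "\<dots> \<longleftrightarrow> [k + (n - 1) * i + i = j + i] (mod n)"
    by (simp add: cong_add_rcancel_nat)
  also have "\<dots> \<longleftrightarrow> [k + n * i = i + j] (mod n)"
    using \<open>i < n\<close> by (cases n) (simp_all add: algebra_simps)
  also have "\<dots> \<longleftrightarrow> [k = i + j] (mod n)"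
    by (simp add: cong_def)
  also have "\<dots> \<longleftrightarrow> (i + j) mod n = k"
    using assms by (auto simp: cong_def)
  finally show "(i + j) mod n = k \<longleftrightarrow> j = (k + (n - 1) * i) mod n"
    by blast
qed simp

lemma sum_down_diagonal:
  fixes A :: "nat \<Rightarrow> nat \<Rightarrow> real"
  assumes "k < n"
  shows "(\<Sum>(i, j)\<in>{(i, j). i < n \<and> j < n \<and> (int i - int j) mod int n = int k}. A i j)
       = line_sum n A 1 ((n - k) mod n)"
  unfolding line_sum_def
proof (rule sum_over_graph)
  fix i j assume "i < n" "j < n"
  have "j = ((n - k) mod n + 1 * i) mod n \<longleftrightarrow> [n - k + i = j] (mod n)"
    using \<open>j < n\<close> by (auto simp: cong_def mod_add_left_eq)
  also have "\<dots> \<longleftrightarrow> [n - k + i + k = j + k] (mod n)"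
    by (simp add: cong_add_rcancel_nat)
  also have "\<dots> \<longleftrightarrow> [i = j + k] (mod n)"
    using assms by (simp add: cong_def)
  also have "\<dots> \<longleftrightarrow> [int i = int k + int j] (mod int n)"
    by (simp add: cong_int_iff[symmetric] add.commute)
  also have "\<dots> \<longleftrightarrow> [int i - int j = int k] (mod int n)"
    using cong_add_rcancel[of "int i - int j" "int j" "int k" "int n"] by simp
  also have "\<dots> \<longleftrightarrow> (int i - int j) mod int n = int k"
    using assms by (simp add: cong_def)
  finally show "(int i - int j) mod int n = int k \<longleftrightarrow> j = ((n - k) mod n + 1 * i) mod n"
    by blast
qed simp

lemma panstochastic_iff_line_sums:
  "panstochastic n A \<longleftrightarrow>
     (\<forall>i<n. \<forall>j<n. 0 \<le> A i j) \<and> (\<forall>i<n. (\<Sum>j<n. A i j) = 1) \<and>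
     (\<forall>a\<in>{0, 1, n - 1}. \<forall>k<n. line_sum n A a k = 1)"
proof -
  have columns: "(\<Sum>i<n. A i k) = line_sum n A 0 k" if "k < n" for k
    using that by (simp add: line_sum_def)
  have reflect: "(n - (n - k) mod n) mod n = k" if "k < n" for k
    using that by (cases "k = 0") simp_all
  have downs: "(\<forall>k<n. line_sum n A 1 ((n - k) mod n) = 1) \<longleftrightarrow> (\<forall>k<n. line_sum n A 1 k = 1)"
  proof (intro iffI allI impI)
    fix k assume reflected: "\<forall>k<n. line_sum n A 1 ((n - k) mod n) = 1" and "k < n"
    then show "line_sum n A 1 k = 1"
      using reflected[rule_format, of "(n - k) mod n"] reflect by simp
  qed simp
  show ?thesis
    unfolding panstochastic_def doubly_stochastic_def
    using columns sum_up_diagonal[of _ n A] sum_down_diagonal[of _ n A] downs by auto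
qed

lemma panstochastic_affine_perm_matrix:
  assumes "coprime a n" "coprime (a + 1) n" "coprime (a + n - 1) n"
  shows "panstochastic n (perm_matrix (affine_perm n a k))"
  unfolding panstochastic_iff_line_sums
proof (intro conjI ballI allI impI)
  fix i j
  show "0 \<le> perm_matrix (affine_perm n a k) i j"
    by (simp add: perm_matrix_def)
next
  fix i assume "i < n"
  then show "(\<Sum>j<n. perm_matrix (affine_perm n a k) i j) = 1"
    by (simp add: perm_matrix_def affine_perm_def)
next
  fix b c assume "b \<in> {0, 1, n - 1}" "c < n"
  then consider "b = 0" | "b = 1" | "b = n - 1"
    by blast
  then show "line_sum n (perm_matrix (affine_perm n a k)) b c = 1"
  proof cases
    case 1
    show ?thesis
      by (rule line_sum_affine_perm_matrix[OF assms(1)]) (simp_all add: 1 \<open>c < n\<close>)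
  next
    case 2
    show ?thesis
      by (rule line_sum_affine_perm_matrix[OF assms(3)]) (use 2 \<open>c < n\<close> in auto)
  next
    case 3
    show ?thesis
      by (rule line_sum_affine_perm_matrix[OF assms(2)]) (use 3 \<open>c < n\<close> in auto)
  qed
qed

lemma coprime_shifted_difference:
  fixes n i i0 :: nat
  assumes "prime n" "i0 < n" "i < n" "i \<noteq> i0"
  shows "coprime (i + n - i0) n"
proof -
  have "\<not> n dvd i + n - i0"
  proof
    assume "n dvd i + n - i0"
    then obtain q where q: "i + n - i0 = n * q" ..
    then have "n * q < n * 2"
      using assms(3) by linarith
    then have "q < 2"
      by simp
    moreover have "q \<noteq> 0"
      by (rule notI) (use q assms(2) in simp)
    moreover have "q \<noteq> 1"
      by (rule notI) (use q assms(2,4) in simp)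
    ultimately show False
      by linarith
  qed
  then show ?thesis
    using assms(1) by (simp add: prime_imp_coprime coprime_commute)
qed

text \<open>Every entry other than (i0, j0) lies on exactly one of the n + 1 lines through (i0, j0), the
  row of i0 being the line of infinite slope.\<close>

lemma sum_lines_through_point:
  fixes A :: "nat \<Rightarrow> nat \<Rightarrow> real"
  assumes "prime n" "i0 < n" "j0 < n"
  shows "(\<Sum>j<n. A i0 j) + (\<Sum>a<n. line_sum n A a (intercept n a i0 j0))
       = n * A i0 j0 + (\<Sum>i<n. \<Sum>j<n. A i j)"
proof -
  have line: "line_sum n A a (intercept n a i0 j0) = (\<Sum>i<n. A i ((j0 + a * (i + n - i0)) mod n))" for a
  proof -
    have "a * (n - i0) + a * i = a * (i + n - i0)" for i
      using assms(2) by (simp flip: add_mult_distrib2 add: add.commute)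
    then show ?thesis
      unfolding line_sum_def intercept_def by (simp add: mod_add_left_eq add.assoc)
  qed
  have through: "(\<Sum>a<n. A i ((j0 + a * (i + n - i0)) mod n))
               = (if i = i0 then n * A i0 j0 else (\<Sum>j<n. A i j))" if "i < n" for i
  proof (cases "i = i0")
    case True
    then show ?thesis
      using assms(3) by simp
  next
    case False
    have "coprime (i + n - i0) n"
      using assms(1,2) that False by (rule coprime_shifted_difference)
    then show ?thesis
      using False by (simp add: sum.reindex_bij_betw[OF bij_betw_affine_mod])
  qed
  have "(\<Sum>a<n. line_sum n A a (intercept n a i0 j0))
      = (\<Sum>i<n. if i = i0 then n * A i0 j0 else (\<Sum>j<n. A i j))"
    unfolding line by (subst sum.swap) (simp add: through)
  also have "\<dots> = n * A i0 j0 + (\<Sum>i\<in>{..<n} - {i0}. \<Sum>j<n. A i j)"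
    using assms(2) by (simp add: sum.delta_remove)
  also have "\<dots> = n * A i0 j0 + (\<Sum>i<n. \<Sum>j<n. A i j) - (\<Sum>j<n. A i0 j)"
    using sum.remove[of "{..<n}" i0 "\<lambda>i. \<Sum>j<n. A i j"] assms(2) by simp
  finally show ?thesis
    by simp
qed

lemma sum_convex_comb_eq_one:
  fixes c :: "nat \<Rightarrow> real"
  assumes "(\<Sum>l<m. c l) = 1" "\<And>l. l < m \<Longrightarrow> sum (g l) S = 1"
    and "\<And>p. p \<in> S \<Longrightarrow> f p = (\<Sum>l<m. c l * g l p)"
  shows "sum f S = 1"
proof -
  have "sum f S = (\<Sum>p\<in>S. \<Sum>l<m. c l * g l p)"
    using assms(3) by (rule sum.cong[OF refl])
  also have "\<dots> = (\<Sum>l<m. c l * sum (g l) S)"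
    by (subst sum.swap) (simp add: sum_distrib_left)
  also have "\<dots> = 1"
    using assms(1,2) by simp
  finally show ?thesis .
qed

lemma panstochastic_if_convex_comb_of:
  assumes "\<And>P. Q P \<Longrightarrow> panstochastic n P" and "convex_comb_of n Q A"
  shows "panstochastic n A"
proof -
  obtain m :: nat and c M where "\<forall>l<m. 0 \<le> c l \<and> Q (M l)" and sum_c: "(\<Sum>l<m. c l) = 1"
    and "\<forall>i<n. \<forall>j<n. A i j = (\<Sum>l<m. c l * M l i j)"
    using assms(2) unfolding convex_comb_of_def by blast
  then have c: "\<And>l. l < m \<Longrightarrow> 0 \<le> c l \<and> Q (M l)"
    and A: "\<And>i j. i < n \<Longrightarrow> j < n \<Longrightarrow> A i j = (\<Sum>l<m. c l * M l i j)"
    by simp_all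
  have M: "panstochastic n (M l)" if "l < m" for l
    using assms(1) c that by blast
  show ?thesis
    unfolding panstochastic_iff_line_sums
  proof (intro conjI allI impI ballI)
    fix i j assume "i < n" "j < n"
    have "0 \<le> M l i j" if "l < m" for l
      using M[OF that] \<open>i < n\<close> \<open>j < n\<close> by (simp add: panstochastic_iff_line_sums)
    then have "0 \<le> c l * M l i j" if "l < m" for l
      using c[OF that] that by simp
    then show "0 \<le> A i j"
      unfolding A[OF \<open>i < n\<close> \<open>j < n\<close>] by (intro sum_nonneg) simp
  next
    fix i assume "i < n"
    have row_M: "(\<Sum>j<n. M l i j) = 1" if "l < m" for l
      using M[OF that, unfolded panstochastic_iff_line_sums] \<open>i < n\<close> by blast
    show "(\<Sum>j<n. A i j) = 1"
      by (rule sum_convex_comb_eq_one[OF sum_c, where g = "\<lambda>l. M l i"])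
        (simp_all add: A row_M \<open>i < n\<close>)
  next
    fix a k assume "a \<in> {0, 1, n - 1}" "k < n"
    have line_M: "line_sum n (M l) a k = 1" if "l < m" for l
      using M[OF that, unfolded panstochastic_iff_line_sums] \<open>a \<in> _\<close> \<open>k < n\<close> by blast
    show "line_sum n A a k = 1"
      unfolding line_sum_def
      by (rule sum_convex_comb_eq_one[OF sum_c, where g = "\<lambda>l i. M l i ((k + a * i) mod n)"])
        (simp_all add: A line_M[unfolded line_sum_def])
  qed
qed

lemma convex_comb_of_two_families:
  fixes x y :: "nat \<Rightarrow> real" and P R :: "nat \<Rightarrow> nat \<Rightarrow> nat \<Rightarrow> real"
  assumes "0 < m"
    and "\<And>k. k < m \<Longrightarrow> Q (P k)" "\<And>k. k < m \<Longrightarrow> Q (R k)"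
    and "\<And>i j. i < n \<Longrightarrow> j < n \<Longrightarrow> (\<Sum>k<m. P k i j) = (\<Sum>k<m. R k i j)"
    and "\<And>k k'. k < m \<Longrightarrow> k' < m \<Longrightarrow> 0 \<le> x k + y k'"
    and "(\<Sum>k<m. x k) + (\<Sum>k<m. y k) = 1"
    and "\<And>i j. i < n \<Longrightarrow> j < n \<Longrightarrow> A i j = (\<Sum>k<m. x k * P k i j) + (\<Sum>k<m. y k * R k i j)"
  shows "convex_comb_of n Q A"
proof -
  txt \<open>Both families sum to the same matrix, so moving weight t from the P's to the R's does not
    change A; t = min x makes every weight nonnegative.\<close>
  define t where "t = Min (x ` {..<m})"
  define c where "c l = (if l < m then x l - t else y (l - m) + t)" for l
  define M where "M l = (if l < m then P l else R (l - m))" for l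
  have split: "(\<Sum>l<m + k. f l) = (\<Sum>l<m. f l) + (\<Sum>l<k. f (m + l))" for k and f :: "nat \<Rightarrow> real"
    by (induction k) simp_all
  have "t \<in> x ` {..<m}"
    unfolding t_def using assms(1) by (intro Min_in) auto
  then obtain k0 where "k0 < m" "t = x k0"
    by auto
  have "0 \<le> c l" if "l < m + m" for l
  proof (cases "l < m")
    case True
    then show ?thesis
      unfolding c_def t_def by simp
  next
    case False
    then have "l - m < m"
      using that by linarith
    then show ?thesis
      using assms(5)[OF \<open>k0 < m\<close>, of "l - m"] False unfolding c_def \<open>t = x k0\<close> by simp
  qed
  moreover have "(\<Sum>l<m + m. c l) = 1"
    using assms(6) by (simp add: split c_def sum.distrib sum_subtractf)
  moreover have "A i j = (\<Sum>l<m + m. c l * M l i j)" if "i < n" "j < n" for i j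
    using assms(4,7)[OF that]
    by (simp add: split c_def M_def algebra_simps sum.distrib sum_subtractf flip: sum_distrib_left)
  moreover have "Q (M l)" if "l < m + m" for l
    using assms(2,3) that by (simp add: M_def)
  ultimately show ?thesis
    unfolding convex_comb_of_def by blast
qed

lemma panstochastic5_entry_eq_line_sums:
  assumes "panstochastic 5 A" "i < 5" "j < 5"
  shows "5 * A i j = line_sum 5 A 2 (intercept 5 2 i j) + line_sum 5 A 3 (intercept 5 3 i j) - 1"
proof -
  have lines: "line_sum 5 A a (intercept 5 a i j) = 1" if "a \<in> {0, 1, 4}" for a
    using assms(1) that by (auto simp: panstochastic_iff_line_sums intercept_def)
  have row: "(\<Sum>j<5. A i j) = 1" and total: "(\<Sum>i<5. \<Sum>j<5. A i j) = 5"
    using assms(1,2) by (simp_all add: panstochastic_iff_line_sums)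
  have "(\<Sum>j<5. A i j) + (\<Sum>a<5. line_sum 5 A a (intercept 5 a i j)) = 5 * A i j + (\<Sum>i<5. \<Sum>j<5. A i j)"
    using sum_lines_through_point[of 5 i j A] assms(2,3) by simp
  then show ?thesis
    using lines row total by (simp add: eval_nat_numeral)
qed

lemma panstochastic5_imp_convex_comb:
  assumes "panstochastic 5 A"
  shows "convex_comb_of 5 (\<lambda>P. is_perm_matrix 5 P \<and> panstochastic 5 P) A"
proof -
  define x where "x k = line_sum 5 A 2 k / 5" for k
  define y where "y k = (line_sum 5 A 3 k - 1) / 5" for k
  have cell: "A i j = x (intercept 5 2 i j) + y (intercept 5 3 i j)" if "i < 5" "j < 5" for i j
    using panstochastic5_entry_eq_line_sums[OF assms that] by (simp add: x_def y_def field_simps)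
  have family: "is_perm_matrix 5 (perm_matrix (affine_perm 5 a k)) \<and> panstochastic 5 (perm_matrix (affine_perm 5 a k))"
    if "a \<in> {2, 3}" for a k
  proof -
    have "coprime b 5" if "\<not> 5 dvd b" for b :: nat
      using prime_imp_coprime[of 5 b] that by (simp add: coprime_commute)
    then have "coprime a 5" "coprime (a + 1) 5" "coprime (a + 5 - 1) 5"
      using that by auto
    then show ?thesis
      unfolding is_perm_matrix_def using affine_perm_permutes panstochastic_affine_perm_matrix by blast
  qed
  have family_sum: "(\<Sum>k<5. perm_matrix (affine_perm 5 a k) i j) = 1" if "i < 5" "j < 5" for a i j
    using sum_affine_perm_matrices[OF that, of "\<lambda>_. 1"] by simp
  have weights_nonneg: "0 \<le> x k + y k'" if bounds: "k < 5" "k' < 5" for k k'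
  proof -
    obtain i where "i < 5" and meet: "(k + 2 * i) mod 5 = (k' + 3 * i) mod 5"
      by (rule lines_meet[of 1 5 3 2 k k']) (simp_all add: bounds)
    define j where "j = (k + 2 * i) mod 5"
    have "j < 5"
      by (simp add: j_def)
    have "k = intercept 5 2 i j"
      using on_line_iff_intercept[OF \<open>i < 5\<close> \<open>j < 5\<close> bounds(1)] j_def by blast
    moreover have "k' = intercept 5 3 i j"
      using on_line_iff_intercept[OF \<open>i < 5\<close> \<open>j < 5\<close> bounds(2)] j_def meet by blast
    ultimately have "x k + y k' = A i j"
      using cell[OF \<open>i < 5\<close> \<open>j < 5\<close>] by simp
    then show ?thesis
      using assms \<open>i < 5\<close> \<open>j < 5\<close> by (simp add: panstochastic_iff_line_sums)
  qed
  have total: "(\<Sum>i<5. \<Sum>j<5. A i j) = 5"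
    using assms by (simp add: panstochastic_iff_line_sums)
  have weights_sum: "(\<Sum>k<5. x k) + (\<Sum>k<5. y k) = 1"
    using sum_line_sums[of 5 A 2] sum_line_sums[of 5 A 3] total
    by (simp add: x_def y_def sum_divide_distrib[symmetric] sum_subtractf)
  show ?thesis
  proof (rule convex_comb_of_two_families[where m = 5 and x = x and y = y
        and P = "\<lambda>k. perm_matrix (affine_perm 5 2 k)" and R = "\<lambda>k. perm_matrix (affine_perm 5 3 k)"])
    fix i j :: nat assume "i < 5" "j < 5"
    then show "A i j = (\<Sum>k<5. x k * perm_matrix (affine_perm 5 2 k) i j)
                     + (\<Sum>k<5. y k * perm_matrix (affine_perm 5 3 k) i j)"
      by (simp add: cell sum_affine_perm_matrices)
  qed (simp_all add: family family_sum weights_nonneg weights_sum)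
qed

theorem theorem1p1:
  fixes A :: "nat \<Rightarrow> nat \<Rightarrow> real"
  shows "panstochastic 5 A \<longleftrightarrow>
         convex_comb_of 5 (\<lambda>P. is_perm_matrix 5 P \<and> panstochastic 5 P) A"
proof
  assume "convex_comb_of 5 (\<lambda>P. is_perm_matrix 5 P \<and> panstochastic 5 P) A"
  then show "panstochastic 5 A"
    by (rule panstochastic_if_convex_comb_of[rotated]) simp
qed (rule panstochastic5_imp_convex_comb)

end
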